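(* Let $S_\alpha=(\mathrm{Id}_n+W_\alpha V_\alpha)\cdots(\mathrm{Id}_n+W_1V_1)Z$ for $1\le\alpha\le d$ and $k\ge1$. With the convention $\dot F=\{H,F\}$ and $H=\operatorname{tr}S_\alpha^k$, the vector field on $\mathcal M^\times_{n,d,q}$ induced by the quasi-Poisson bracket is $\dot X=-kXS_\alpha^k$, $\dot Z=k(S_\alpha^kZ-ZS_\alpha^k)$, $\dot V_\beta=-kV_\beta S_\alpha^k$ and $\dot W_\beta=kS_\alpha^kW_\beta$ for $\beta\le\alpha$, $\dot V_\beta=0$ and $\dot W_\beta=0$ for $\beta>\alpha$; moreover $\dot S_\alpha=0$.
   Context: Fix integers $n\ge1$, $d\ge1$ and $q\in\mathbb C^\times$ not a root of unity. Greek indices range over $\{1,\dots,d\}$; set $o(\alpha,\beta)=0$ if $\alpha=\beta$, $o(\alpha,\beta)=1$ if $\alpha<\beta$, $o(\alpha,\beta)=-1$ if $\alpha>\beta$. Let $\mathcal M^\times_{n,d,q}$ be the affine variety of tuples $(X,Z,V_1,\dots,V_d,W_1,\dots,W_d)$ with $X,Z\in\mathrm{GL}_n(\mathbb C)$, $V_\alpha\in\mathrm{Mat}_{1\times n}(\mathbb C)$, $W_\alpha\in\mathrm{Mat}_{n\times 1}(\mathbb C)$, such that every $\mathrm{Id}_n+W_\alpha V_\alpha$ is invertible and $XZX^{-1}Z^{-1}(\mathrm{Id}_n+W_1V_1)^{-1}\cdots(\mathrm{Id}_n+W_dV_d)^{-1}=q\,\mathrm{Id}_n$. Write $V_{\alpha,j}$,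 $W_{\alpha,k}$ for the entries. Let $\{-,-\}$ be the antisymmetric biderivation on functions of $(X,Z,V_\alpha,W_\alpha)$ (Van den Bergh's quasi-Poisson bracket) given by $\{X_{ij},X_{kl}\}=\tfrac12(\delta_{il}(X^2)_{kj}-\delta_{kj}(X^2)_{il})$, $\{Z_{ij},Z_{kl}\}=\tfrac12(\delta_{kj}(Z^2)_{il}-\delta_{il}(Z^2)_{kj})$, $\{X_{ij},Z_{kl}\}=\tfrac12((ZX)_{kj}\delta_{il}+\delta_{kj}(XZ)_{il}+Z_{kj}X_{il}-X_{kj}Z_{il})$, $\{U_{ij},W_{\alpha,k}\}=\tfrac12(\delta_{kj}(UW_\alpha)_i-U_{kj}W_{\alpha,i})$, $\{U_{ij},V_{\alpha,l}\}=\tfrac12((V_\alpha U)_j\delta_{il}-V_{\alpha,j}U_{il})$ for $U\in\{X,Z\}$, $\{V_{\alpha,j},V_{\beta,l}\}=\tfrac12 o(\beta,\alpha)(V_{\beta,j}V_{\alpha,l}+V_{\alpha,j}V_{\beta,l})$, $\{W_{\alpha,i},W_{\beta,k}\}=\tfrac12 o(\beta,\alpha)(W_{\beta,k}W_{\alpha,i}+W_{\alpha,k}W_{\beta,i})$, $\{V_{\alpha,j},W_{\beta,k}\}=\delta_{\alpha\beta}(\delta_{kj}+\tfrac12W_{\alpha,k}V_{\alpha,j}+\tfrac12\delta_{kj}V_\alpha W_\alpha)+\tfrac12 o(\alpha,\beta)(\delta_{kj}V_\alpha W_\beta+W_{\beta,k}V_{\alpha,j})$. The vector field of $H$ is $\dot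 M_{ij}=\{H,M_{ij}\}$ for each matrix entry $M_{ij}$. *)

theory Defs
  imports "HOL-Analysis.Analysis"
begin

text \<open>Coordinates on the space of tuples (X, Z, V_1..V_d, W_1..W_d).
  Matrix indices range over a finite type 'n (so n = CARD('n)); the quiver
  index alpha is a natural number in {1..d}.\<close>

datatype 'n coord = CX 'n 'n | CZ 'n 'n | CV nat 'n | CW nat 'n

type_synonym 'n point = "'n coord \<Rightarrow> complex"

definition coords :: "nat \<Rightarrow> ('n::finite) coord set" where
  "coords d = range (\<lambda>(i,j). CX i j) \<union> range (\<lambda>(i,j). CZ i j)
     \<union> (\<lambda>(a,j). CV a j) ` ({1..d} \<times> UNIV) \<union> (\<lambda>(a,j). CW a j) ` ({1..d} \<times> UNIV)"

definition Xm :: "('n::finite) point \<Rightarrow> complex^'n^'n" where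
  "Xm p = (\<chi> i j. p (CX i j))"
definition Zm :: "('n::finite) point \<Rightarrow> complex^'n^'n" where
  "Zm p = (\<chi> i j. p (CZ i j))"
text \<open>V_alpha is a row vector, W_alpha a column vector; both stored as complex^'n.\<close>
definition Vv :: "('n::finite) point \<Rightarrow> nat \<Rightarrow> complex^'n" where
  "Vv p a = (\<chi> j. p (CV a j))"
definition Wv :: "('n::finite) point \<Rightarrow> nat \<Rightarrow> complex^'n" where
  "Wv p a = (\<chi> i. p (CW a i))"

definition outer :: "complex^'n \<Rightarrow> complex^'n \<Rightarrow> complex^'n^'n" where
  "outer w v = (\<chi> i j. w$i * v$j)"
definition rowcol :: "complex^'n \<Rightarrow> complex^('n::finite) \<Rightarrow> complex" where
  "rowcol v w = (\<Sum>j\<in>UNIV. v$j * w$j)"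

definition Am :: "('n::finite) point \<Rightarrow> nat \<Rightarrow> complex^'n^'n" where
  "Am p a = mat 1 + outer (Wv p a) (Vv p a)"

fun mpow :: "complex^('n::finite)^'n \<Rightarrow> nat \<Rightarrow> complex^'n^'n" where
  "mpow A 0 = mat 1"
| "mpow A (Suc m) = A ** mpow A m"

fun Sm :: "('n::finite) point \<Rightarrow> nat \<Rightarrow> complex^'n^'n" where
  "Sm p 0 = Zm p"
| "Sm p (Suc a) = Am p (Suc a) ** Sm p a"

fun invprod :: "('n::finite) point \<Rightarrow> nat \<Rightarrow> complex^'n^'n" where
  "invprod p 0 = mat 1"
| "invprod p (Suc a) = invprod p a ** matrix_inv (Am p (Suc a))"

definition inM :: "nat \<Rightarrow> complex \<Rightarrow> ('n::finite) point \<Rightarrow> bool" where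
  "inM d q p \<longleftrightarrow> invertible (Xm p) \<and> invertible (Zm p)
     \<and> (\<forall>a\<in>{1..d}. invertible (Am p a))
     \<and> Xm p ** Zm p ** matrix_inv (Xm p) ** matrix_inv (Zm p) ** invprod p d = mat q"

definition ord_sign :: "nat \<Rightarrow> nat \<Rightarrow> complex" where
  "ord_sign a b = (if a = b then 0 else if a < b then 1 else -1)"

definition kd :: "'a \<Rightarrow> 'a \<Rightarrow> complex" where
  "kd x y = (if x = y then 1 else 0)"

fun br :: "('n::finite) coord \<Rightarrow> 'n coord \<Rightarrow> 'n point \<Rightarrow> complex" where
  "br (CX i j) (CX k l) p = (let X = Xm p in
      1/2 * (kd i l * (X**X)$k$j - kd k j * (X**X)$i$l))"
| "br (CZ i j) (CZ k l) p = (let Z = Zm p in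
      1/2 * (kd k j * (Z**Z)$i$l - kd i l * (Z**Z)$k$j))"
| "br (CX i j) (CZ k l) p = (let X = Xm p; Z = Zm p in
      1/2 * ((Z**X)$k$j * kd i l + kd k j * (X**Z)$i$l + Z$k$j * X$i$l - X$k$j * Z$i$l))"
| "br (CZ k l) (CX i j) p = (let X = Xm p; Z = Zm p in
      - (1/2 * ((Z**X)$k$j * kd i l + kd k j * (X**Z)$i$l + Z$k$j * X$i$l - X$k$j * Z$i$l)))"
| "br (CX i j) (CW a k) p = (let U = Xm p; W = Wv p a in
      1/2 * (kd k j * (U *v W)$i - U$k$j * W$i))"
| "br (CW a k) (CX i j) p = (let U = Xm p; W = Wv p a in
      - (1/2 * (kd k j * (U *v W)$i - U$k$j * W$i)))"
| "br (CZ i j) (CW a k) p = (let U = Zm p; W = Wv p a in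
      1/2 * (kd k j * (U *v W)$i - U$k$j * W$i))"
| "br (CW a k) (CZ i j) p = (let U = Zm p; W = Wv p a in
      - (1/2 * (kd k j * (U *v W)$i - U$k$j * W$i)))"
| "br (CX i j) (CV a l) p = (let U = Xm p; V = Vv p a in
      1/2 * ((V v* U)$j * kd i l - V$j * U$i$l))"
| "br (CV a l) (CX i j) p = (let U = Xm p; V = Vv p a in
      - (1/2 * ((V v* U)$j * kd i l - V$j * U$i$l)))"
| "br (CZ i j) (CV a l) p = (let U = Zm p; V = Vv p a in
      1/2 * ((V v* U)$j * kd i l - V$j * U$i$l))"
| "br (CV a l) (CZ i j) p = (let U = Zm p; V = Vv p a in
      - (1/2 * ((V v* U)$j * kd i l - V$j * U$i$l)))"
| "br (CV a j) (CV b l) p = (let Va = Vv p a; Vb = Vv p b in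
      1/2 * ord_sign b a * (Vb$j * Va$l + Va$j * Vb$l))"
| "br (CW a i) (CW b k) p = (let Wa = Wv p a; Wb = Wv p b in
      1/2 * ord_sign b a * (Wb$k * Wa$i + Wa$k * Wb$i))"
| "br (CV a j) (CW b k) p = (let Va = Vv p a; Wa = Wv p a; Wb = Wv p b in
      kd a b * (kd k j + 1/2 * Wa$k * Va$j + 1/2 * kd k j * rowcol Va Wa)
      + 1/2 * ord_sign a b * (kd k j * rowcol Va Wb + Wb$k * Va$j))"
| "br (CW b k) (CV a j) p = (let Va = Vv p a; Wa = Wv p a; Wb = Wv p b in
      - (kd a b * (kd k j + 1/2 * Wa$k * Va$j + 1/2 * kd k j * rowcol Va Wa)
      + 1/2 * ord_sign a b * (kd k j * rowcol Va Wb + Wb$k * Va$j)))"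

definition pd :: "('n point \<Rightarrow> complex) \<Rightarrow> 'n coord \<Rightarrow> 'n point \<Rightarrow> complex" where
  "pd F c p = deriv (\<lambda>t. F (p(c := t))) (p c)"

definition qpb :: "nat \<Rightarrow> ('n::finite point \<Rightarrow> complex) \<Rightarrow> ('n point \<Rightarrow> complex) \<Rightarrow> 'n point \<Rightarrow> complex" where
  "qpb d F G p = (\<Sum>c\<in>coords d. \<Sum>c'\<in>coords d. pd F c p * pd G c' p * br c c' p)"

end

theory Submission
  imports Defs
begin

text \<open>By the Leibniz rule the derivative of \<open>H = tr (S_a^k)\<close> in a direction \<open>Y\<close> is
  \<open>k tr (S_a^(k-1) dS_a(Y))\<close>. For the direction \<open>Y = {-, c}\<close> of the bracket with a coordinate \<open>c\<close>,
  the derivatives of the factors of \<open>S_a\<close> telescope: there are matrices \<open>K_b\<close> and \<open>N\<close> with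
  \<open>dA_b = K_b A_b - A_b K_(b-1)\<close> and \<open>dZ = K_0 Z + Z N\<close>, hence \<open>dS_a = K_a S_a + S_a N\<close> and
  \<open>{H, c} = k tr (S_a^k (K_a + N))\<close>, which is the claimed component of the vector field. That vector
  field telescopes in turn, with \<open>K_b = k S_a^k\<close> and \<open>N = -k S_a^k\<close>, so the derivative of \<open>S_a\<close>
  along it is the commutator \<open>k [S_a^k, S_a] = 0\<close>.\<close>

section \<open>Derivatives of matrix-valued functions\<close>

definition has_mat_deriv :: "(complex \<Rightarrow> complex^'n^'m) \<Rightarrow> complex^'n^'m \<Rightarrow> complex \<Rightarrow> bool" where
  "has_mat_deriv F F' x \<longleftrightarrow> (\<forall>i j. ((\<lambda>t. F t $ i $ j) has_field_derivative F' $ i $ j) (at x))"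

lemma has_mat_deriv_const: "has_mat_deriv (\<lambda>t. M) 0 x"
  by (simp add: has_mat_deriv_def)

lemma has_mat_deriv_mult:
  fixes F :: "complex \<Rightarrow> complex^'n^'m" and G :: "complex \<Rightarrow> complex^'p^'n"
  assumes "has_mat_deriv F F' x" "has_mat_deriv G G' x"
  shows "has_mat_deriv (\<lambda>t. F t ** G t) (F' ** G x + F x ** G') x"
  unfolding has_mat_deriv_def
proof (intro allI)
  fix i j
  have "((\<lambda>t. \<Sum>k\<in>UNIV. F t $ i $ k * G t $ k $ j) has_field_derivative
        (\<Sum>k\<in>UNIV. F' $ i $ k * G x $ k $ j + F x $ i $ k * G' $ k $ j)) (at x)"
    using assms unfolding has_mat_deriv_def by (auto intro!: DERIV_sum derivative_eq_intros)
  then show "((\<lambda>t. (F t ** G t) $ i $ j) has_field_derivative (F' ** G x + F x ** G') $ i $ j) (at x)"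
    by (simp add: matrix_matrix_mult_def sum.distrib)
qed

lemma has_mat_deriv_trace:
  assumes "has_mat_deriv F F' x"
  shows "((\<lambda>t. trace (F t)) has_field_derivative trace F') (at x)"
  using assms unfolding trace_def has_mat_deriv_def by (auto intro: DERIV_sum)

lemma mpow_commute: "Q ** M = M ** Q \<Longrightarrow> Q ** mpow M m = mpow M m ** Q"
  by (induction m) (simp_all add: matrix_mul_assoc, metis matrix_mul_assoc)

fun mpow_deriv :: "complex^('n::finite)^'n \<Rightarrow> complex^'n^'n \<Rightarrow> nat \<Rightarrow> complex^'n^'n" where
  "mpow_deriv M D 0 = 0"
| "mpow_deriv M D (Suc m) = D ** mpow M m + M ** mpow_deriv M D m"

lemma has_mat_deriv_mpow:
  assumes "has_mat_deriv F F' x"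
  shows "has_mat_deriv (\<lambda>t. mpow (F t) m) (mpow_deriv (F x) F' m) x"
proof (induction m)
  case 0 then show ?case by (simp add: has_mat_deriv_const)
next
  case (Suc m)
  from has_mat_deriv_mult[OF assms Suc] show ?case by simp
qed

lemma trace_mult_mpow_deriv:
  assumes "Q ** M = M ** Q"
  shows "trace (Q ** mpow_deriv M D m) = of_nat m * trace (Q ** mpow M (m - 1) ** D)"
  using assms
proof (induction m arbitrary: Q)
  case 0 then show ?case by (simp add: trace_def)
next
  case (Suc m)
  have "(Q ** M) ** M = M ** (Q ** M)" using Suc.prems by (metis matrix_mul_assoc)
  note IH = Suc.IH[OF this]
  have cyclic: "trace (Q ** (D ** mpow M m)) = trace (Q ** mpow M m ** D)"
  proof -
    have "trace (Q ** (D ** mpow M m)) = trace (mpow M m ** (Q ** D))"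
      by (metis matrix_mul_assoc trace_mul_sym)
    also have "\<dots> = trace (Q ** mpow M m ** D)"
      using mpow_commute[OF Suc.prems, of m] by (metis matrix_mul_assoc)
    finally show ?thesis .
  qed
  show ?case
  proof (cases m)
    case 0 then show ?thesis using cyclic by (simp add: matrix_add_ldistrib trace_add)
  next
    case (Suc m')
    have "(Q ** M) ** mpow M (m - 1) = Q ** mpow M m" using Suc by (simp add: matrix_mul_assoc)
    then show ?thesis using cyclic IH
      by (simp add: matrix_add_ldistrib trace_add matrix_mul_assoc algebra_simps)
  qed
qed

lemma trace_mpow_deriv: "trace (mpow_deriv M D m) = of_nat m * trace (mpow M (m - 1) ** D)"
  using trace_mult_mpow_deriv[of "mat 1" M D m] by simp

definition dZ :: "('n::finite coord \<Rightarrow> complex) \<Rightarrow> complex^'n^'n" where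
  "dZ Y = (\<chi> i j. Y (CZ i j))"
definition dV :: "('n::finite coord \<Rightarrow> complex) \<Rightarrow> nat \<Rightarrow> complex^'n" where
  "dV Y b = (\<chi> j. Y (CV b j))"
definition dW :: "('n::finite coord \<Rightarrow> complex) \<Rightarrow> nat \<Rightarrow> complex^'n" where
  "dW Y b = (\<chi> j. Y (CW b j))"
definition dA :: "'n::finite point \<Rightarrow> ('n coord \<Rightarrow> complex) \<Rightarrow> nat \<Rightarrow> complex^'n^'n" where
  "dA p Y b = outer (dW Y b) (Vv p b) + outer (Wv p b) (dV Y b)"

fun dS :: "'n::finite point \<Rightarrow> ('n coord \<Rightarrow> complex) \<Rightarrow> nat \<Rightarrow> complex^'n^'n" where
  "dS p Y 0 = dZ Y"
| "dS p Y (Suc b) = dA p Y (Suc b) ** Sm p b + Am p (Suc b) ** dS p Y b"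

definition coord_dir :: "'a \<Rightarrow> 'a \<Rightarrow> complex" where
  "coord_dir c = (\<lambda>c'. kd c' c)"

lemma has_field_derivative_coord: "((\<lambda>t. (p(c := t)) c') has_field_derivative kd c' c) (at x)"
  by (cases "c' = c") (auto simp: kd_def intro!: derivative_eq_intros)

lemma has_mat_deriv_Zm: "has_mat_deriv (\<lambda>t. Zm (p(c := t))) (dZ (coord_dir c)) x"
  unfolding has_mat_deriv_def Zm_def dZ_def coord_dir_def
  by (intro allI, simp only: vec_lambda_beta, rule has_field_derivative_coord)

lemma has_mat_deriv_Am: "has_mat_deriv (\<lambda>t. Am (p(c := t)) b) (dA p (coord_dir c) b) (p c)"
  unfolding has_mat_deriv_def
proof (intro allI)
  fix i j
  have "((\<lambda>t. mat 1 $ i $ j + (p(c := t)) (CW b i) * (p(c := t)) (CV b j)) has_field_derivative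
     0 + (kd (CW b i) c * (p(c := p c)) (CV b j) + kd (CV b j) c * (p(c := p c)) (CW b i))) (at (p c))"
    by (intro DERIV_add DERIV_const DERIV_mult has_field_derivative_coord)
  moreover have "(\<lambda>t. Am (p(c := t)) b $ i $ j)
      = (\<lambda>t. mat 1 $ i $ j + (p(c := t)) (CW b i) * (p(c := t)) (CV b j))"
    by (simp add: Am_def outer_def Wv_def Vv_def)
  moreover have "dA p (coord_dir c) b $ i $ j
      = 0 + (kd (CW b i) c * (p(c := p c)) (CV b j) + kd (CV b j) c * (p(c := p c)) (CW b i))"
    by (simp add: dA_def outer_def Wv_def Vv_def dW_def dV_def coord_dir_def algebra_simps)
  ultimately show "((\<lambda>t. Am (p(c := t)) b $ i $ j) has_field_derivative dA p (coord_dir c) b $ i $ j) (at (p c))"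
    by simp
qed

lemma has_mat_deriv_Sm: "has_mat_deriv (\<lambda>t. Sm (p(c := t)) b) (dS p (coord_dir c) b) (p c)"
proof (induction b)
  case 0 then show ?case by (simp only: dS.simps Sm.simps) (rule has_mat_deriv_Zm)
next
  case (Suc b)
  from has_mat_deriv_mult[OF has_mat_deriv_Am[of p c "Suc b"] Suc] show ?case
    by (simp only: Sm.simps dS.simps fun_upd_triv)
qed

lemma pd_coord: "pd (\<lambda>x. x c0) c p = kd c0 c"
  unfolding pd_def using has_field_derivative_coord[of p c c0 "p c"] by (simp add: DERIV_imp_deriv)

lemma pd_Sm: "pd (\<lambda>x. Sm x a $ i $ j) c p = dS p (coord_dir c) a $ i $ j"
  unfolding pd_def using has_mat_deriv_Sm[of p c a] unfolding has_mat_deriv_def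
  by (simp add: DERIV_imp_deriv)

lemma pd_trace_mpow_Sm:
  "pd (\<lambda>x. trace (mpow (Sm x a) k)) c p = of_nat k * trace (mpow (Sm p a) (k - 1) ** dS p (coord_dir c) a)"
proof -
  have "((\<lambda>t. trace (mpow (Sm (p(c := t)) a) k)) has_field_derivative
     trace (mpow_deriv (Sm (p(c := p c)) a) (dS p (coord_dir c) a) k)) (at (p c))"
    by (rule has_mat_deriv_trace[OF has_mat_deriv_mpow[OF has_mat_deriv_Sm]])
  then show ?thesis unfolding pd_def by (simp add: DERIV_imp_deriv trace_mpow_deriv)
qed

lemma finite_coords: "finite (coords d :: ('n::finite) coord set)"
  unfolding coords_def by auto

lemma coords_memI:
  "CX i j \<in> coords d" "CZ i j \<in> coords d"
  "b \<in> {1..d} \<Longrightarrow> CV b j \<in> coords d" "b \<in> {1..d} \<Longrightarrow> CW b j \<in> coords d"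
  unfolding coords_def by (auto simp: image_iff)

lemma sum_mult_kd: "finite A \<Longrightarrow> x \<in> A \<Longrightarrow> (\<Sum>c\<in>A. f c * kd x c) = f x"
  by (simp add: kd_def if_distrib cong: if_cong)

lemma dA_linear:
  assumes "b \<in> {1..d}"
  shows "(\<Sum>c\<in>coords d. Y c * dA p (coord_dir c) b $ i $ r) = dA p Y b $ i $ r"
proof -
  have "(\<Sum>c\<in>coords d. Y c * dA p (coord_dir c) b $ i $ r)
     = (\<Sum>c\<in>coords d. Y c * kd (CW b i) c) * Vv p b $ r + Wv p b $ i * (\<Sum>c\<in>coords d. Y c * kd (CV b r) c)"
    by (simp add: dA_def outer_def dW_def dV_def coord_dir_def sum.distrib sum_distrib_left
        sum_distrib_right algebra_simps)
  also have "\<dots> = dA p Y b $ i $ r"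
    using assms by (simp add: sum_mult_kd finite_coords coords_memI dA_def outer_def dW_def dV_def)
  finally show ?thesis .
qed

lemma dS_linear:
  "b \<le> d \<Longrightarrow> (\<Sum>c\<in>coords d. Y c * dS p (coord_dir c) b $ i $ j) = dS p Y b $ i $ j"
proof (induction b arbitrary: i j)
  case 0
  then show ?case by (simp add: dZ_def coord_dir_def sum_mult_kd finite_coords coords_memI)
next
  case (Suc b)
  have IH: "\<And>r. (\<Sum>c\<in>coords d. Y c * dS p (coord_dir c) b $ r $ j) = dS p Y b $ r $ j"
    using Suc by simp
  have dA: "\<And>r. (\<Sum>c\<in>coords d. Y c * dA p (coord_dir c) (Suc b) $ i $ r) = dA p Y (Suc b) $ i $ r"
    using Suc.prems by (intro dA_linear) auto
  have "(\<Sum>c\<in>coords d. Y c * dS p (coord_dir c) (Suc b) $ i $ j)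
      = (\<Sum>c\<in>coords d. \<Sum>r\<in>UNIV. Y c * dA p (coord_dir c) (Suc b) $ i $ r * Sm p b $ r $ j
          + Am p (Suc b) $ i $ r * (Y c * dS p (coord_dir c) b $ r $ j))"
    by (simp add: matrix_matrix_mult_def sum_distrib_left sum.distrib algebra_simps)
  also have "\<dots> = (\<Sum>r\<in>UNIV. \<Sum>c\<in>coords d. Y c * dA p (coord_dir c) (Suc b) $ i $ r * Sm p b $ r $ j
          + Am p (Suc b) $ i $ r * (Y c * dS p (coord_dir c) b $ r $ j))"
    by (rule sum.swap)
  also have "\<dots> = (\<Sum>r\<in>UNIV. (\<Sum>c\<in>coords d. Y c * dA p (coord_dir c) (Suc b) $ i $ r) * Sm p b $ r $ j
          + Am p (Suc b) $ i $ r * (\<Sum>c\<in>coords d. Y c * dS p (coord_dir c) b $ r $ j))"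
    by (simp add: sum.distrib sum_distrib_left sum_distrib_right)
  also have "\<dots> = dS p Y (Suc b) $ i $ j"
    by (simp add: dA IH matrix_matrix_mult_def sum.distrib)
  finally show ?case .
qed

lemma sum_trace_mult_linear:
  fixes Y :: "'c \<Rightarrow> complex" and M :: "'c \<Rightarrow> complex^'n^'n" and G :: "complex^'n^'n"
  assumes "finite A" "\<And>i j. (\<Sum>c\<in>A. Y c * M c $ i $ j) = N $ i $ j"
  shows "(\<Sum>c\<in>A. trace (G ** M c) * Y c) = trace (G ** N)"
proof -
  have "(\<Sum>c\<in>A. trace (G ** M c) * Y c) = (\<Sum>i\<in>UNIV. \<Sum>r\<in>UNIV. G $ i $ r * (\<Sum>c\<in>A. Y c * M c $ r $ i))"
    by (simp add: trace_def matrix_matrix_mult_def sum_distrib_right sum_distrib_left mult_ac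
        sum.swap[of _ A])
  then show ?thesis by (simp add: assms(2) trace_def matrix_matrix_mult_def)
qed

definition ham_field :: "nat \<Rightarrow> ('n::finite point \<Rightarrow> complex) \<Rightarrow> 'n point \<Rightarrow> 'n coord \<Rightarrow> complex" where
  "ham_field d F p = (\<lambda>c'. \<Sum>c\<in>coords d. pd F c p * br c c' p)"

lemma qpb_coord:
  assumes "c0 \<in> coords d"
  shows "qpb d F (\<lambda>x. x c0) p = ham_field d F p c0"
  unfolding qpb_def pd_coord ham_field_def
proof (rule sum.cong[OF refl])
  fix c
  have "(\<Sum>c'\<in>coords d. pd F c p * kd c0 c' * br c c' p) = (\<Sum>c'\<in>coords d. (pd F c p * br c c' p) * kd c0 c')"
    by (simp add: algebra_simps)
  also have "\<dots> = pd F c p * br c c0 p" using assms by (simp add: sum_mult_kd finite_coords)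
  finally show "(\<Sum>c'\<in>coords d. pd F c p * kd c0 c' * br c c' p) = pd F c p * br c c0 p" .
qed

lemma qpb_Sm:
  assumes "a \<le> d"
  shows "qpb d F (\<lambda>x. Sm x a $ i $ j) p = dS p (ham_field d F p) a $ i $ j"
proof -
  have "qpb d F (\<lambda>x. Sm x a $ i $ j) p
     = (\<Sum>c'\<in>coords d. \<Sum>c\<in>coords d. pd F c p * br c c' p * dS p (coord_dir c') a $ i $ j)"
    unfolding qpb_def pd_Sm by (subst sum.swap) (simp add: algebra_simps)
  also have "\<dots> = (\<Sum>c'\<in>coords d. ham_field d F p c' * dS p (coord_dir c') a $ i $ j)"
    by (simp add: ham_field_def sum_distrib_right)
  also have "\<dots> = dS p (ham_field d F p) a $ i $ j"
    by (rule dS_linear[OF assms])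
  finally show ?thesis .
qed

lemma qpb_trace_mpow_Sm_coord:
  assumes "a \<le> d" "c0 \<in> coords d"
  shows "qpb d (\<lambda>x. trace (mpow (Sm x a) k)) (\<lambda>x. x c0) p
     = of_nat k * trace (mpow (Sm p a) (k - 1) ** dS p (\<lambda>c. br c c0 p) a)"
proof -
  have "qpb d (\<lambda>x. trace (mpow (Sm x a) k)) (\<lambda>x. x c0) p
      = of_nat k * (\<Sum>c\<in>coords d. trace (mpow (Sm p a) (k - 1) ** dS p (coord_dir c) a) * br c c0 p)"
    by (simp add: qpb_coord[OF assms(2)] ham_field_def pd_trace_mpow_Sm sum_distrib_left mult.assoc)
  also have "\<dots> = of_nat k * trace (mpow (Sm p a) (k - 1) ** dS p (\<lambda>c. br c c0 p) a)"
  proof -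
    have "\<And>i j. (\<Sum>c\<in>coords d. br c c0 p * dS p (coord_dir c) a $ i $ j) = dS p (\<lambda>c. br c c0 p) a $ i $ j"
      by (rule dS_linear[OF assms(1)])
    from sum_trace_mult_linear[OF finite_coords this] show ?thesis by simp
  qed
  finally show ?thesis .
qed

section \<open>Telescoping\<close>

lemma matrix_add_rdistrib: "((A::complex^'n^'m) + B) ** C = A ** C + B ** C"
  by (simp add: vec_eq_iff matrix_matrix_mult_def sum.distrib algebra_simps)

lemma matrix_diff_ldistrib: "(A::complex^'n^'m) ** (B - C) = A ** B - A ** C"
  by (simp add: vec_eq_iff matrix_matrix_mult_def sum_subtractf algebra_simps)

lemma matrix_diff_rdistrib: "((A::complex^'n^'m) - B) ** C = A ** C - B ** C"
  by (simp add: vec_eq_iff matrix_matrix_mult_def sum_subtractf algebra_simps)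

lemmas matrix_distrib = matrix_add_ldistrib matrix_add_rdistrib matrix_diff_ldistrib matrix_diff_rdistrib

lemma dS_telescope:
  assumes "\<forall>b\<in>{1..a}. dA p Y b = K b ** Am p b - Am p b ** K (b - 1)"
    and "dZ Y - K 0 ** Zm p = Zm p ** N"
  shows "dS p Y a = K a ** Sm p a + Sm p a ** N"
  using assms(1)
proof (induction a)
  case 0 then show ?case using assms(2) by (simp add: diff_eq_eq add.commute)
next
  case (Suc b)
  have IH: "dS p Y b = K b ** Sm p b + Sm p b ** N" using Suc by auto
  have "dA p Y (Suc b) = K (Suc b) ** Am p (Suc b) - Am p (Suc b) ** K b"
    using Suc.prems by auto
  then have "dS p Y (Suc b) = (K (Suc b) ** Am p (Suc b) - Am p (Suc b) ** K b) ** Sm p b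
      + Am p (Suc b) ** (K b ** Sm p b + Sm p b ** N)" by (simp add: IH)
  also have "\<dots> = K (Suc b) ** (Am p (Suc b) ** Sm p b) + (Am p (Suc b) ** Sm p b) ** N"
    by (simp add: matrix_distrib matrix_mul_assoc)
  finally show ?case by simp
qed

lemma trace_mpow_mult_telescoped:
  assumes "k \<ge> 1"
  shows "trace (mpow S (k - 1) ** (K ** S + S ** N)) = trace (mpow S k ** K) + trace (mpow S k ** N)"
proof -
  obtain m where k: "k = Suc m" using assms by (cases k) auto
  have "trace (mpow S m ** (K ** S)) = trace (S ** (mpow S m ** K))"
    by (metis matrix_mul_assoc trace_mul_sym)
  then have "trace (mpow S m ** (K ** S)) = trace (mpow S k ** K)"
    using k by (simp add: matrix_mul_assoc)
  moreover have "trace (mpow S m ** (S ** N)) = trace (mpow S k ** N)"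
    using k mpow_commute[of S S m] by (simp add: matrix_mul_assoc)
  ultimately show ?thesis using k by (simp add: matrix_add_ldistrib trace_add)
qed

lemma qpb_trace_mpow_Sm_telescoped:
  assumes "a \<le> d" "k \<ge> 1" "c0 \<in> coords d"
    and "\<forall>b\<in>{1..a}. dA p (\<lambda>c. br c c0 p) b = K b ** Am p b - Am p b ** K (b - 1)"
    and "dZ (\<lambda>c. br c c0 p) - K 0 ** Zm p = Zm p ** N"
  shows "qpb d (\<lambda>x. trace (mpow (Sm x a) k)) (\<lambda>x. x c0) p
     = of_nat k * (trace (mpow (Sm p a) k ** K a) + trace (mpow (Sm p a) k ** N))"
  by (simp only: qpb_trace_mpow_Sm_coord[OF assms(1,3)] dS_telescope[OF assms(4,5)]
      trace_mpow_mult_telescoped[OF assms(2)])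

lemma outer_nth [simp]: "outer u v $ r $ l = u $ r * v $ l"
  by (simp add: outer_def)

lemma outer_matrix_mult_nth [simp]: "(outer a b ** M) $ r $ l = a $ r * (b v* M) $ l"
  by (simp add: outer_def matrix_matrix_mult_def vector_matrix_mult_def sum_distrib_left mult.assoc)

lemma matrix_mult_outer_nth [simp]: "(M ** outer a b) $ r $ l = (M *v a) $ r * b $ l"
  by (simp add: outer_def matrix_matrix_mult_def matrix_vector_mult_def sum_distrib_right mult.assoc)

lemma vector_matrix_mult_outer [simp]: "b v* outer c d = rowcol b c *s d"
  by (simp add: vec_eq_iff outer_def vector_matrix_mult_def rowcol_def sum_distrib_right
      sum_distrib_left mult_ac)

lemma outer_matrix_vector_mult [simp]: "outer c d *v a = rowcol d a *s c"
  by (simp add: vec_eq_iff outer_def matrix_vector_mult_def rowcol_def sum_distrib_left mult_ac)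

lemma trace_matrix_mult_outer [simp]: "trace (T ** outer w v) = rowcol v (T *v w)"
  by (simp add: trace_def rowcol_def mult.commute)

lemma rowcol_scaleL [simp]: "rowcol (c *s v) w = c * rowcol v w"
  by (simp add: rowcol_def sum_distrib_left mult_ac)

lemma rowcol_scaleR [simp]: "rowcol v (c *s w) = c * rowcol v w"
  by (simp add: rowcol_def sum_distrib_left mult_ac)

lemma rowcol_minusL [simp]: "rowcol (- v) w = - rowcol v w"
  by (simp add: rowcol_def sum_negf)

lemma rowcol_minusR [simp]: "rowcol v (- w) = - rowcol v w"
  by (simp add: rowcol_def sum_negf)

lemma rowcol_axisL [simp]: "rowcol (axis i 1) w = w $ i"
  by (simp add: rowcol_def axis_def if_distrib[of "\<lambda>x. x * y" for y] cong: if_cong)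

lemma rowcol_axisR [simp]: "rowcol v (axis j 1) = v $ j"
  by (simp add: rowcol_def axis_def if_distrib[of "\<lambda>x. y * x" for y] cong: if_cong)

lemma rowcol_axis_vector_matrix_mult [simp]: "rowcol (axis i 1 v* X) W = (X *v W) $ i"
  by (simp add: rowcol_def axis_def vector_matrix_mult_def matrix_vector_mult_def
      if_distrib[of "\<lambda>x. x * y" for y] cong: if_cong)

lemma rowcol_matrix_vector_mult_axis [simp]: "rowcol V (X *v axis j 1) = (V v* X) $ j"
  by (simp add: rowcol_def axis_def vector_matrix_mult_def matrix_vector_mult_def
      if_distrib[of "\<lambda>x. y * x" for y] cong: if_cong)

lemma matrix_vector_mult_axis_nth [simp]: "(X *v axis j 1) $ r = X $ r $ j"
  by (simp add: axis_def matrix_vector_mult_def if_distrib[of "\<lambda>x. y * x" for y] cong: if_cong)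

lemma axis_vector_matrix_mult_nth [simp]: "(axis i 1 v* X) $ l = X $ i $ l"
  by (simp add: axis_def vector_matrix_mult_def if_distrib[of "\<lambda>x. x * y" for y] cong: if_cong)

lemma matrix_vector_mult_uminus [simp]: "(M::complex^'n^'m) *v (- v) = - (M *v v)"
  by (simp add: vec_eq_iff matrix_vector_mult_def sum_negf)

lemma uminus_vector_matrix_mult [simp]: "(- v) v* (M::complex^'n^'m) = - (v v* M)"
  by (simp add: vec_eq_iff vector_matrix_mult_def sum_negf)

lemma axis_nth_kd: "axis j (1::complex) $ r = kd r j"
  by (simp add: axis_def kd_def)

lemmas scalar_assoc = vector_scalar_commute scalar_vector_matrix_assoc matrix_vector_mul_assoc
  vector_matrix_mul_assoc

section \<open>The telescoping data of the coordinate brackets\<close>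

text \<open>The brackets with \<open>X_ij\<close> and \<open>Z_ij\<close> act on every \<open>A_b\<close> by the same infinitesimal
  conjugation, \<open>dA_b = [gauge_K U i j, A_b]\<close> with \<open>U = X\<close> resp. \<open>U = Z\<close>.\<close>
definition gauge_K :: "complex^'n^'n \<Rightarrow> 'n::finite \<Rightarrow> 'n \<Rightarrow> complex^'n^'n" where
  "gauge_K U i j = outer (axis j 1) ((-1/2) *s (axis i 1 v* U)) + outer ((1/2) *s (U *v axis j 1)) (axis i 1)"

definition N_X :: "'n::finite point \<Rightarrow> 'n \<Rightarrow> 'n \<Rightarrow> complex^'n^'n" where
  "N_X p i j = outer ((-1/2) *s (Xm p *v axis j 1)) (axis i 1) + outer ((-1/2) *s axis j 1) (axis i 1 v* Xm p)"

definition N_Z :: "'n::finite point \<Rightarrow> 'n \<Rightarrow> 'n \<Rightarrow> complex^'n^'n" where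
  "N_Z p i j = outer ((1/2) *s (Zm p *v axis j 1)) (axis i 1) + outer ((-1/2) *s axis j 1) (axis i 1 v* Zm p)"

definition K_V :: "'n::finite point \<Rightarrow> nat \<Rightarrow> 'n \<Rightarrow> nat \<Rightarrow> complex^'n^'n" where
  "K_V p c j b = outer ((if b < c then 1/2 else -1/2) *s axis j 1) (Vv p c)"

definition K_W :: "'n::finite point \<Rightarrow> nat \<Rightarrow> 'n \<Rightarrow> nat \<Rightarrow> complex^'n^'n" where
  "K_W p c i b = outer ((if b < c then -1/2 else 1/2) *s Wv p c) (axis i 1)"

lemma dA_bracket_X: "dA p (\<lambda>c. br c (CX i j) p) b = gauge_K (Xm p) i j ** Am p b - Am p b ** gauge_K (Xm p) i j"
  apply (simp add: vec_eq_iff Am_def gauge_K_def matrix_distrib)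
  apply (simp add: dA_def dW_def dV_def Let_def axis_nth_kd scalar_assoc)
  by (auto simp: kd_def field_simps)

lemma dA_bracket_Z: "dA p (\<lambda>c. br c (CZ i j) p) b = gauge_K (Zm p) i j ** Am p b - Am p b ** gauge_K (Zm p) i j"
  apply (simp add: vec_eq_iff Am_def gauge_K_def matrix_distrib)
  apply (simp add: dA_def dW_def dV_def Let_def axis_nth_kd scalar_assoc)
  by (auto simp: kd_def field_simps)

lemma dA_bracket_V:
  assumes "b \<ge> 1" "c \<ge> 1"
  shows "dA p (\<lambda>c'. br c' (CV c j) p) b = K_V p c j b ** Am p b - Am p b ** K_V p c j (b - 1)"
  using assms
  apply (simp add: vec_eq_iff Am_def K_V_def matrix_distrib)
  apply (simp add: dA_def dW_def dV_def Let_def axis_nth_kd scalar_assoc ord_sign_def)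
  by (auto simp: kd_def field_simps)

lemma dA_bracket_W:
  assumes "b \<ge> 1" "c \<ge> 1"
  shows "dA p (\<lambda>c'. br c' (CW c i) p) b = K_W p c i b ** Am p b - Am p b ** K_W p c i (b - 1)"
  using assms
  apply (simp add: vec_eq_iff Am_def K_W_def matrix_distrib)
  apply (simp add: dA_def dW_def dV_def Let_def axis_nth_kd scalar_assoc ord_sign_def)
  by (auto simp: kd_def field_simps)

lemma dZ_bracket_X: "dZ (\<lambda>c. br c (CX i j) p) - gauge_K (Xm p) i j ** Zm p = Zm p ** N_X p i j"
  apply (simp add: vec_eq_iff gauge_K_def N_X_def matrix_distrib)
  apply (simp add: dZ_def Let_def axis_nth_kd scalar_assoc)
  by (auto simp: kd_def field_simps)

lemma dZ_bracket_Z: "dZ (\<lambda>c. br c (CZ i j) p) - gauge_K (Zm p) i j ** Zm p = Zm p ** N_Z p i j"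
  apply (simp add: vec_eq_iff gauge_K_def N_Z_def matrix_distrib)
  apply (simp add: dZ_def Let_def axis_nth_kd scalar_assoc)
  by (auto simp: kd_def field_simps)

lemma dZ_bracket_V:
  "c \<ge> 1 \<Longrightarrow> dZ (\<lambda>c'. br c' (CV c j) p) - K_V p c j 0 ** Zm p = Zm p ** outer ((-1/2) *s axis j 1) (Vv p c)"
  apply (simp add: vec_eq_iff K_V_def matrix_distrib)
  apply (simp add: dZ_def Let_def axis_nth_kd scalar_assoc)
  by (auto simp: kd_def field_simps)

lemma dZ_bracket_W:
  "c \<ge> 1 \<Longrightarrow> dZ (\<lambda>c'. br c' (CW c i) p) - K_W p c i 0 ** Zm p = Zm p ** outer ((1/2) *s Wv p c) (axis i 1)"
  apply (simp add: vec_eq_iff K_W_def matrix_distrib)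
  apply (simp add: dZ_def Let_def axis_nth_kd scalar_assoc)
  by (auto simp: kd_def field_simps)

lemma qpb_trace_mpow_Sm_X:
  assumes "a \<le> d" "k \<ge> 1"
  shows "qpb d (\<lambda>x. trace (mpow (Sm x a) k)) (\<lambda>x. x (CX i j)) p
     = - of_nat k * (Xm p ** mpow (Sm p a) k) $ i $ j"
proof -
  let ?T = "mpow (Sm p a) k"
  have "qpb d (\<lambda>x. trace (mpow (Sm x a) k)) (\<lambda>x. x (CX i j)) p
      = of_nat k * (trace (?T ** gauge_K (Xm p) i j) + trace (?T ** N_X p i j))"
    by (rule qpb_trace_mpow_Sm_telescoped[OF assms coords_memI(1), where K = "\<lambda>_. gauge_K (Xm p) i j"])
      (simp_all add: dA_bracket_X dZ_bracket_X)
  also have "trace (?T ** gauge_K (Xm p) i j) + trace (?T ** N_X p i j) = - (Xm p ** ?T) $ i $ j"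
    by (simp add: gauge_K_def N_X_def matrix_distrib trace_add scalar_assoc field_simps)
  finally show ?thesis by simp
qed

lemma qpb_trace_mpow_Sm_Z:
  assumes "a \<le> d" "k \<ge> 1"
  shows "qpb d (\<lambda>x. trace (mpow (Sm x a) k)) (\<lambda>x. x (CZ i j)) p
     = of_nat k * ((mpow (Sm p a) k ** Zm p) $ i $ j - (Zm p ** mpow (Sm p a) k) $ i $ j)"
proof -
  let ?T = "mpow (Sm p a) k"
  have "qpb d (\<lambda>x. trace (mpow (Sm x a) k)) (\<lambda>x. x (CZ i j)) p
      = of_nat k * (trace (?T ** gauge_K (Zm p) i j) + trace (?T ** N_Z p i j))"
    by (rule qpb_trace_mpow_Sm_telescoped[OF assms coords_memI(2), where K = "\<lambda>_. gauge_K (Zm p) i j"])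
      (simp_all add: dA_bracket_Z dZ_bracket_Z)
  also have "trace (?T ** gauge_K (Zm p) i j) + trace (?T ** N_Z p i j)
      = (?T ** Zm p) $ i $ j - (Zm p ** ?T) $ i $ j"
    by (simp add: gauge_K_def N_Z_def matrix_distrib trace_add scalar_assoc field_simps)
  finally show ?thesis .
qed

lemma qpb_trace_mpow_Sm_V:
  assumes "a \<le> d" "k \<ge> 1" "b \<in> {1..d}"
  shows "qpb d (\<lambda>x. trace (mpow (Sm x a) k)) (\<lambda>x. x (CV b j)) p
     = of_nat k * (if b \<le> a then - (Vv p b v* mpow (Sm p a) k) $ j else 0)"
proof -
  let ?T = "mpow (Sm p a) k" and ?N = "outer ((-1/2) *s axis j 1) (Vv p b)"
  have "qpb d (\<lambda>x. trace (mpow (Sm x a) k)) (\<lambda>x. x (CV b j)) p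
      = of_nat k * (trace (?T ** K_V p b j a) + trace (?T ** ?N))"
    using assms(3) by (intro qpb_trace_mpow_Sm_telescoped[OF assms(1,2) coords_memI(3)])
      (simp_all add: dA_bracket_V dZ_bracket_V)
  also have "trace (?T ** K_V p b j a) + trace (?T ** ?N) = (if b \<le> a then - (Vv p b v* ?T) $ j else 0)"
    by (auto simp: K_V_def trace_add scalar_assoc field_simps)
  finally show ?thesis .
qed

lemma qpb_trace_mpow_Sm_W:
  assumes "a \<le> d" "k \<ge> 1" "b \<in> {1..d}"
  shows "qpb d (\<lambda>x. trace (mpow (Sm x a) k)) (\<lambda>x. x (CW b i)) p
     = of_nat k * (if b \<le> a then (mpow (Sm p a) k *v Wv p b) $ i else 0)"
proof -
  let ?T = "mpow (Sm p a) k" and ?N = "outer ((1/2) *s Wv p b) (axis i 1)"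
  have "qpb d (\<lambda>x. trace (mpow (Sm x a) k)) (\<lambda>x. x (CW b i)) p
      = of_nat k * (trace (?T ** K_W p b i a) + trace (?T ** ?N))"
    using assms(3) by (intro qpb_trace_mpow_Sm_telescoped[OF assms(1,2) coords_memI(4)])
      (simp_all add: dA_bracket_W dZ_bracket_W)
  also have "trace (?T ** K_W p b i a) + trace (?T ** ?N) = (if b \<le> a then (?T *v Wv p b) $ i else 0)"
    by (auto simp: K_W_def trace_add scalar_assoc field_simps)
  finally show ?thesis .
qed

lemma mat_matrix_mult_nth: "(mat c ** (M::complex^'n^'m)) $ i $ j = c * M $ i $ j"
  by (simp add: matrix_matrix_mult_def mat_def if_distrib[of "\<lambda>x. x * y" for y] cong: if_cong)

lemma mat_matrix_mult_vector [simp]: "(mat c ** (M::complex^'n^'n)) *v w = c *s (M *v w)"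
  by (simp add: vec_eq_iff matrix_vector_mult_def mat_matrix_mult_nth sum_distrib_left mult.assoc)

lemma vector_mat_matrix_mult [simp]: "v v* (mat c ** (M::complex^'n^'n)) = c *s (v v* M)"
  by (simp add: vec_eq_iff vector_matrix_mult_def mat_matrix_mult_nth sum_distrib_left mult_ac)

lemma matrix_mult_mat_left_commute: "(M::complex^'n^'n) ** (mat c ** T) = mat c ** (M ** T)"
proof -
  have "M ** mat c = mat c ** M"
    by (simp add: vec_eq_iff mat_matrix_mult_nth matrix_matrix_mult_def mat_def mult.commute
        if_distrib[of "\<lambda>x. y * x" for y] cong: if_cong)
  then show ?thesis by (metis matrix_mul_assoc)
qed

lemma dS_eq_0_if_flow_commutes:
  fixes Y :: "'n::finite coord \<Rightarrow> complex"
  assumes comm: "T ** Sm p a = Sm p a ** T"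
    and Z: "\<forall>r l. Y (CZ r l) = c * ((T ** Zm p) $ r $ l - (Zm p ** T) $ r $ l)"
    and V: "\<forall>b\<in>{1..a}. \<forall>l. Y (CV b l) = - c * (Vv p b v* T) $ l"
    and W: "\<forall>b\<in>{1..a}. \<forall>r. Y (CW b r) = c * (T *v Wv p b) $ r"
  shows "dS p Y a = 0"
proof -
  have "\<forall>b\<in>{1..a}. dA p Y b = mat c ** T ** Am p b - Am p b ** (mat c ** T)"
    using V W by (simp add: vec_eq_iff Am_def matrix_distrib dA_def dW_def dV_def mat_matrix_mult_nth
        algebra_simps)
  moreover have "dZ Y - mat c ** T ** Zm p = Zm p ** (mat (- c) ** T)"
    using Z by (simp add: vec_eq_iff dZ_def matrix_mul_assoc[symmetric] matrix_mult_mat_left_commute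
        mat_matrix_mult_nth algebra_simps)
  ultimately have "dS p Y a = mat c ** T ** Sm p a + Sm p a ** (mat (- c) ** T)"
    by (rule dS_telescope[where K = "\<lambda>_. mat c ** T"])
  then show ?thesis
    using comm by (simp add: vec_eq_iff matrix_mul_assoc[symmetric] matrix_mult_mat_left_commute
        mat_matrix_mult_nth)
qed

lemma dS_ham_field_trace_mpow_Sm:
  assumes "a \<le> d" "k \<ge> 1"
  shows "dS p (ham_field d (\<lambda>x. trace (mpow (Sm x a) k)) p) a = 0"
proof (rule dS_eq_0_if_flow_commutes)
  show "mpow (Sm p a) k ** Sm p a = Sm p a ** mpow (Sm p a) k"
    using mpow_commute[of "Sm p a" "Sm p a" k] by simp
  have "b \<in> {1..a} \<Longrightarrow> b \<in> {1..d}" for b using assms(1) by auto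
  then show "\<forall>r l. ham_field d (\<lambda>x. trace (mpow (Sm x a) k)) p (CZ r l)
      = of_nat k * ((mpow (Sm p a) k ** Zm p) $ r $ l - (Zm p ** mpow (Sm p a) k) $ r $ l)"
    and "\<forall>b\<in>{1..a}. \<forall>l. ham_field d (\<lambda>x. trace (mpow (Sm x a) k)) p (CV b l)
      = - of_nat k * (Vv p b v* mpow (Sm p a) k) $ l"
    and "\<forall>b\<in>{1..a}. \<forall>r. ham_field d (\<lambda>x. trace (mpow (Sm x a) k)) p (CW b r)
      = of_nat k * (mpow (Sm p a) k *v Wv p b) $ r"
    by (simp_all add: qpb_coord[symmetric] coords_memI qpb_trace_mpow_Sm_Z[OF assms]
        qpb_trace_mpow_Sm_V[OF assms] qpb_trace_mpow_Sm_W[OF assms])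
qed

theorem mainTheorem15:
  fixes d k a :: nat and q :: complex and p :: "('n::finite) point"
  assumes hd: "d \<ge> 1"
    and hq: "q \<noteq> 0" and hroot: "\<forall>m::nat. m \<ge> 1 \<longrightarrow> q ^ m \<noteq> 1"
    and ha: "a \<in> {1..d}" and hk: "k \<ge> 1"
    and hp: "inM d q p"
  defines "H \<equiv> (\<lambda>x. trace (mpow (Sm x a) k))"
  defines "SK \<equiv> mpow (Sm p a) k"
  shows "(\<forall>i j. qpb d H (\<lambda>x. x (CX i j)) p = - of_nat k * (Xm p ** SK)$i$j)
       \<and> (\<forall>i j. qpb d H (\<lambda>x. x (CZ i j)) p = of_nat k * ((SK ** Zm p)$i$j - (Zm p ** SK)$i$j))
       \<and> (\<forall>b\<in>{1..d}. \<forall>j. b \<le> a \<longrightarrow> qpb d H (\<lambda>x. x (CV b j)) p = - of_nat k * (Vv p b v* SK)$j)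
       \<and> (\<forall>b\<in>{1..d}. \<forall>i. b \<le> a \<longrightarrow> qpb d H (\<lambda>x. x (CW b i)) p = of_nat k * (SK *v Wv p b)$i)
       \<and> (\<forall>b\<in>{1..d}. \<forall>j. a < b \<longrightarrow> qpb d H (\<lambda>x. x (CV b j)) p = 0)
       \<and> (\<forall>b\<in>{1..d}. \<forall>i. a < b \<longrightarrow> qpb d H (\<lambda>x. x (CW b i)) p = 0)
       \<and> (\<forall>i j. qpb d H (\<lambda>x. Sm x a $ i $ j) p = 0)"
proof -
  have a: "a \<le> d" using ha by simp
  show ?thesis
    unfolding H_def SK_def
    by (simp add: qpb_trace_mpow_Sm_X[OF a hk] qpb_trace_mpow_Sm_Z[OF a hk]
      qpb_trace_mpow_Sm_V[OF a hk] qpb_trace_mpow_Sm_W[OF a hk]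
      qpb_Sm[OF a] dS_ham_field_trace_mpow_Sm[OF a hk])
qed

end
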